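(* Let $n,m,p$ be positive integers and $A\in\mathbb{R}^{n\times n}$, $B\in\mathbb{R}^{n\times m}$, $C\in\mathbb{R}^{p\times n}$, $D\in\mathbb{R}^{p\times m}$ with $DD^T$ positive definite and $BD^T=0$. Assume $(A,B)$ is reachable and $(A,C)$ is observable, and let $N\ge n$ be an integer. Then there exists $\phi_N$ with $0<\phi_N<\tilde\phi_N$ such that for every symmetric $\bar\Phi\in\mathbb{R}^{nN\times nN}$ with $0\le\bar\Phi\le\phi_NI_{nN}$, the matrices $\Omega_{\bar\Phi}$ and $W_{\bar\Phi}$ are positive definite.
   Context: $\le$ is the Loewner order on symmetric matrices; $\sigma_1(M)$ is the largest singular value. Reachability of $(A,B)$ means $\mathrm{rank}[B\ AB\ \cdots\ A^{n-1}B]=n$; observability of $(A,C)$ means $(A^T,C^T)$ is reachable. Block matrices: $\mathcal{R}_N=[B\ AB\ \cdots\ A^{N-1}B]$; $\mathcal{O}_N$ the block column with blocks (top to bottom) $CA^{N-1},\dots,CA,C$; $\mathcal{O}_N^R$ the block column with blocks $A^{N-1},\dots,A,I_n$; $\mathcal{D}_N=I_N\otimes D$; $\mathcal{H}_N$ the $N\times N$ block matrix with $(i,j)$ block $CA^{j-i-1}B$ for $j>i$ and $0$ otherwise; $\mathcal{L}_N$ the $N\times N$ block matrix with $(i,j)$ block $A^{j-i-1}B$ for $j>i$ and $0$ otherwise. Define $\mathcal{J}_N=\mathcal{O}_N^R-\mathcal{L}_N\mathcal{H}_N^T(\mathcal{D}_N\mathcal{D}_N^T+\mathcal{H}_N\mathcal{H}_N^T)^{-1}\mathcal{O}_N$,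 $\Omega_N=\mathcal{O}_N^T(\mathcal{D}_N\mathcal{D}_N^T+\mathcal{H}_N\mathcal{H}_N^T)^{-1}\mathcal{O}_N$, $M_N=\mathcal{L}_N(I_{Nm}+\mathcal{H}_N^T(\mathcal{D}_N\mathcal{D}_N^T)^{-1}\mathcal{H}_N)^{-1}\mathcal{L}_N^T$, and $\tilde\phi_N=1/\sigma_1(M_N)$ (with $1/0=+\infty$). For symmetric $\bar\Phi$ with $0\le\bar\Phi<\tilde\phi_NI_{nN}$: $S_{\bar\Phi}^{-1}:=-(I_{nN}-\bar\Phi M_N)^{-1}\bar\Phi$ (this equals $(-\bar\Phi^{-1}+M_N)^{-1}$ when $\bar\Phi$ is invertible), $\Omega_{\bar\Phi}=\Omega_N+\mathcal{J}_N^TS_{\bar\Phi}^{-1}\mathcal{J}_N$, $\mathcal{Q}_{\bar\Phi}=(I_{Nm}+\mathcal{H}_N^T(\mathcal{D}_N\mathcal{D}_N^T)^{-1}\mathcal{H}_N-\mathcal{L}_N^T\bar\Phi\mathcal{L}_N)^{-1}$, and $W_{\bar\Phi}=\mathcal{R}_N\mathcal{Q}_{\bar\Phi}\mathcal{R}_N^T$. *)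

theory Defs
  imports "Jordan_Normal_Form.Matrix" "Jordan_Normal_Form.DL_Rank" "Jordan_Normal_Form.Char_Poly"
    "HOL-Library.Extended_Real"
begin

(* Matrices are Jordan_Normal_Form matrices 'real mat' with explicit dimensions.
   Block indices are 0-based: block (i,j), 0 <= i,j < N. *)

definition block_mat :: "nat \<Rightarrow> nat \<Rightarrow> nat \<Rightarrow> nat \<Rightarrow> (nat \<Rightarrow> nat \<Rightarrow> real mat) \<Rightarrow> real mat" where
  "block_mat r c nr nc f = mat (r * nr) (c * nc) (\<lambda>(i, j). f (i div r) (j div c) $$ (i mod r, j mod c))"

(* matrix inverse (used only for invertible square matrices) *)
definition inv_mat :: "real mat \<Rightarrow> real mat" where
  "inv_mat X = (SOME Y. Y \<in> carrier_mat (dim_row X) (dim_row X) \<and> inverts_mat X Y \<and> inverts_mat Y X)"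

definition sym_mat :: "real mat \<Rightarrow> bool" where
  "sym_mat X \<longleftrightarrow> square_mat X \<and> transpose_mat X = X"

definition psd_mat :: "real mat \<Rightarrow> bool" where
  "psd_mat X \<longleftrightarrow> sym_mat X \<and> (\<forall>x \<in> carrier_vec (dim_row X). x \<bullet> (X *\<^sub>v x) \<ge> 0)"

definition pd_mat :: "real mat \<Rightarrow> bool" where
  "pd_mat X \<longleftrightarrow> sym_mat X \<and> (\<forall>x \<in> carrier_vec (dim_row X). x \<noteq> 0\<^sub>v (dim_row X) \<longrightarrow> x \<bullet> (X *\<^sub>v x) > 0)"

definition sigma1 :: "real mat \<Rightarrow> real" where
  "sigma1 M = sqrt (Max {k. eigenvalue (transpose_mat M * M) k})"

definition reachable :: "nat \<Rightarrow> real mat \<Rightarrow> real mat \<Rightarrow> bool" where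
  "reachable n A B \<longleftrightarrow>
     vec_space.rank n (block_mat n (dim_col B) 1 n (\<lambda>_ j. (A ^\<^sub>m j) * B)) = n"

definition observable :: "nat \<Rightarrow> real mat \<Rightarrow> real mat \<Rightarrow> bool" where
  "observable n A C \<longleftrightarrow> reachable n (transpose_mat A) (transpose_mat C)"

context
  fixes n m p N :: nat and A B C D :: "real mat"
begin

definition RN :: "real mat" where
  "RN = block_mat n m 1 N (\<lambda>_ j. (A ^\<^sub>m j) * B)"

definition ON :: "real mat" where
  "ON = block_mat p n N 1 (\<lambda>i _. C * (A ^\<^sub>m (N - 1 - i)))"

definition ONR :: "real mat" where
  "ONR = block_mat n n N 1 (\<lambda>i _. A ^\<^sub>m (N - 1 - i))"

definition DN :: "real mat" where
  "DN = block_mat p m N N (\<lambda>i j. if i = j then D else 0\<^sub>m p m)"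

definition HN :: "real mat" where
  "HN = block_mat p m N N (\<lambda>i j. if j > i then C * (A ^\<^sub>m (j - i - 1)) * B else 0\<^sub>m p m)"

definition LN :: "real mat" where
  "LN = block_mat n m N N (\<lambda>i j. if j > i then (A ^\<^sub>m (j - i - 1)) * B else 0\<^sub>m n m)"

definition JN :: "real mat" where
  "JN = ONR - LN * transpose_mat HN
          * inv_mat (DN * transpose_mat DN + HN * transpose_mat HN) * ON"

definition OmegaN :: "real mat" where
  "OmegaN = transpose_mat ON * inv_mat (DN * transpose_mat DN + HN * transpose_mat HN) * ON"

definition MN :: "real mat" where
  "MN = LN * inv_mat (1\<^sub>m (N * m) + transpose_mat HN * inv_mat (DN * transpose_mat DN) * HN)
          * transpose_mat LN"

definition phi_tilde :: ereal where
  "phi_tilde = (if sigma1 MN = 0 then \<infinity> else ereal (1 / sigma1 MN))"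

definition S_inv :: "real mat \<Rightarrow> real mat" where
  "S_inv Phi = - (inv_mat (1\<^sub>m (n * N) - Phi * MN) * Phi)"

definition Omega_Phi :: "real mat \<Rightarrow> real mat" where
  "Omega_Phi Phi = OmegaN + transpose_mat JN * S_inv Phi * JN"

definition Q_Phi :: "real mat \<Rightarrow> real mat" where
  "Q_Phi Phi = inv_mat (1\<^sub>m (N * m) + transpose_mat HN * inv_mat (DN * transpose_mat DN) * HN
                        - transpose_mat LN * Phi * LN)"

definition W_Phi :: "real mat \<Rightarrow> real mat" where
  "W_Phi Phi = RN * Q_Phi Phi * transpose_mat RN"

end

end

theory Submission
  imports Defs
begin

text \<open>
  \<open>\<Omega>\<^sub>\<Phi> = \<Omega>\<^sub>N + \<J>\<^sub>N\<^sup>T S\<^sub>\<Phi>\<^sup>-\<^sup>1 \<J>\<^sub>N\<close>, where \<open>\<Omega>\<^sub>N\<close> is positive definite because observability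
  makes \<open>\<O>\<^sub>N\<close> injective, and \<open>S\<^sub>\<Phi>\<^sup>-\<^sup>1 = -(I - \<Phi>M\<^sub>N)\<^sup>-\<^sup>1\<Phi>\<close> is symmetric and bounded below by
  \<open>-4\<phi>I\<close> once \<open>4\<phi>\<^sup>2\<parallel>M\<^sub>N\<parallel>\<^sup>2 \<le> 1\<close>. So for small \<open>\<phi>\<close> the perturbation is dominated by the least
  eigenvalue of \<open>\<Omega>\<^sub>N\<close>. Likewise \<open>\<Q>\<^sub>\<Phi>\<^sup>-\<^sup>1 \<ge> (1 - \<phi>\<parallel>\<L>\<^sub>N\<parallel>\<^sup>2) I\<close> is positive definite for small
  \<open>\<phi>\<close>, and reachability makes \<open>\<R>\<^sub>N\<^sup>T\<close> injective, so \<open>W\<^sub>\<Phi> = \<R>\<^sub>N \<Q>\<^sub>\<Phi> \<R>\<^sub>N\<^sup>T\<close> is positive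
  definite. Bounding operator norms by Frobenius norms makes \<open>\<phi>\<^sub>N\<close> an explicit minimum, and it
  lies below \<open>1/\<sigma>\<^sub>1(M\<^sub>N)\<close> because \<open>\<sigma>\<^sub>1(M\<^sub>N) \<ge> 0\<close>: the last block row of \<open>\<L>\<^sub>N\<close> vanishes, so
  \<open>M\<^sub>N\<close> is singular.
\<close>

section \<open>Quadratic forms and norm bounds\<close>

lemma scalar_prod_self_nonneg: "0 \<le> (x :: real vec) \<bullet> x"
  unfolding scalar_prod_def by (auto intro: sum_nonneg)

lemma scalar_prod_self_eq_0_iff:
  assumes "x \<in> carrier_vec k"
  shows "(x :: real vec) \<bullet> x = 0 \<longleftrightarrow> x = 0\<^sub>v k"
proof
  assume "x \<bullet> x = 0"
  then have "\<forall>i\<in>{0..<dim_vec x}. x $ i * x $ i = 0"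
    unfolding scalar_prod_def by (subst sum_nonneg_eq_0_iff[symmetric]) auto
  then show "x = 0\<^sub>v k" using assms by (intro eq_vecI) auto
qed (use assms in simp)

lemma scalar_prod_self_pos: "x \<in> carrier_vec k \<Longrightarrow> x \<noteq> 0\<^sub>v k \<Longrightarrow> 0 < (x :: real vec) \<bullet> x"
  using scalar_prod_self_nonneg[of x] scalar_prod_self_eq_0_iff[of x k] by linarith

lemma scalar_prod_add_self_le:
  fixes a b :: "real vec"
  assumes a: "a \<in> carrier_vec k" and b: "b \<in> carrier_vec k"
  shows "(a + b) \<bullet> (a + b) \<le> 2 * (a \<bullet> a) + 2 * (b \<bullet> b)"
proof -
  have ab: "a \<bullet> b = b \<bullet> a" using comm_scalar_prod[OF a b] .
  have "(a + b) \<bullet> (a + b) = a \<bullet> a + 2 * (a \<bullet> b) + b \<bullet> b"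
    using a b ab by (simp add: add_scalar_prod_distrib[of _ k] scalar_prod_add_distrib[of _ k])
  moreover have "(a - b) \<bullet> (a - b) = a \<bullet> a - 2 * (a \<bullet> b) + b \<bullet> b"
    using a b ab by (simp add: minus_scalar_prod_distrib[of _ k] scalar_prod_minus_distrib[of _ k])
  ultimately show ?thesis using scalar_prod_self_nonneg[of "a - b"] by linarith
qed

lemma vec_diff_eq_iff:
  fixes a b c :: "real vec"
  assumes a: "a \<in> carrier_vec k" and b: "b \<in> carrier_vec k" and c: "c \<in> carrier_vec k"
  shows "a - b = c \<longleftrightarrow> a = c + b"
proof -
  have "a - b = c \<longleftrightarrow> (\<forall>i<k. a $ i - b $ i = c $ i)"
    using a b c by (auto simp: vec_eq_iff)
  also have "\<dots> \<longleftrightarrow> (\<forall>i<k. a $ i = c $ i + b $ i)" by (auto simp: algebra_simps)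
  also have "\<dots> \<longleftrightarrow> a = c + b"
    using a b c by (auto simp: vec_eq_iff)
  finally show ?thesis .
qed

lemma mult_mat_vec_zero_vec[simp]: "A \<in> carrier_mat r c \<Longrightarrow> A *\<^sub>v 0\<^sub>v c = (0\<^sub>v r :: real vec)"
  by (rule eq_vecI) (auto simp: row_def)

lemma smult_one_mat_mult_vec:
  "x \<in> carrier_vec k \<Longrightarrow> (a \<cdot>\<^sub>m 1\<^sub>m k) *\<^sub>v x = a \<cdot>\<^sub>v (x :: real vec)"
proof (rule eq_vecI)
  fix i assume "x \<in> carrier_vec k" "i < dim_vec (a \<cdot>\<^sub>v x)"
  moreover have "row (a \<cdot>\<^sub>m 1\<^sub>m k) i = a \<cdot>\<^sub>v unit_vec k i" if "i < k"
    by (rule eq_vecI) (use that in \<open>auto simp: unit_vec_def\<close>)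
  ultimately show "((a \<cdot>\<^sub>m 1\<^sub>m k) *\<^sub>v x) $ i = (a \<cdot>\<^sub>v x) $ i"
    using comm_scalar_prod[of "unit_vec k i" k x] by (simp add: scalar_prod_right_unit)
qed simp

lemma quad_form_add:
  fixes P Q :: "real mat"
  assumes "P \<in> carrier_mat k k" "Q \<in> carrier_mat k k" "x \<in> carrier_vec k"
  shows "x \<bullet> ((P + Q) *\<^sub>v x) = x \<bullet> (P *\<^sub>v x) + x \<bullet> (Q *\<^sub>v x)"
  using assms by (simp add: add_mult_distrib_mat_vec scalar_prod_add_distrib[of _ k])

lemma quad_form_minus:
  fixes P Q :: "real mat"
  assumes "P \<in> carrier_mat k k" "Q \<in> carrier_mat k k" "x \<in> carrier_vec k"
  shows "x \<bullet> ((P - Q) *\<^sub>v x) = x \<bullet> (P *\<^sub>v x) - x \<bullet> (Q *\<^sub>v x)"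
  using assms by (simp add: minus_mult_distrib_mat_vec scalar_prod_minus_distrib[of _ k])

lemma quad_form_congruence:
  fixes R X :: "real mat"
  assumes R: "R \<in> carrier_mat r k" and X: "X \<in> carrier_mat k k" and x: "x \<in> carrier_vec r"
  shows "x \<bullet> ((R * X * transpose_mat R) *\<^sub>v x)
    = (transpose_mat R *\<^sub>v x) \<bullet> (X *\<^sub>v (transpose_mat R *\<^sub>v x))"
proof -
  have "(R * X * transpose_mat R) *\<^sub>v x = (R * X) *\<^sub>v (transpose_mat R *\<^sub>v x)"
    by (rule assoc_mult_mat_vec) (use R X x in auto)
  also have "\<dots> = R *\<^sub>v (X *\<^sub>v (transpose_mat R *\<^sub>v x))"
    by (rule assoc_mult_mat_vec) (use R X x in auto)
  finally have "(R * X * transpose_mat R) *\<^sub>v x = R *\<^sub>v (X *\<^sub>v (transpose_mat R *\<^sub>v x))" .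
  then show ?thesis
    using transpose_vec_mult_scalar[OF R _ x, of "X *\<^sub>v (transpose_mat R *\<^sub>v x)"] R X x by simp
qed

lemma transpose_congruence:
  fixes R X :: "real mat"
  assumes R: "R \<in> carrier_mat r k" and X: "X \<in> carrier_mat k k"
  shows "transpose_mat (R * X * transpose_mat R) = R * transpose_mat X * transpose_mat R"
proof -
  have "transpose_mat (R * X * transpose_mat R) = R * transpose_mat (R * X)"
    using transpose_mult[of "R * X" r k "transpose_mat R" r] R X by simp
  also have "\<dots> = R * transpose_mat X * transpose_mat R"
    using R X by (simp add: transpose_mult[OF R X] assoc_mult_mat[of _ r k _ k _ r])
  finally show ?thesis .
qed

lemma psd_mat_carrier_iff:
  "P \<in> carrier_mat k k \<Longrightarrow>
    psd_mat P \<longleftrightarrow> transpose_mat P = P \<and> (\<forall>x\<in>carrier_vec k. 0 \<le> x \<bullet> (P *\<^sub>v x))"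
  unfolding psd_mat_def sym_mat_def by auto

lemma pd_mat_carrier_iff:
  "P \<in> carrier_mat k k \<Longrightarrow>
    pd_mat P \<longleftrightarrow> transpose_mat P = P \<and> (\<forall>x\<in>carrier_vec k. x \<noteq> 0\<^sub>v k \<longrightarrow> 0 < x \<bullet> (P *\<^sub>v x))"
  unfolding pd_mat_def sym_mat_def by auto

lemma pd_mat_imp_psd_mat:
  assumes P: "P \<in> carrier_mat k k" and pd: "pd_mat P"
  shows "psd_mat P"
  unfolding psd_mat_carrier_iff[OF P]
proof (intro conjI ballI)
  fix x :: "real vec" assume x: "x \<in> carrier_vec k"
  show "0 \<le> x \<bullet> (P *\<^sub>v x)"
    using pd x P unfolding pd_mat_carrier_iff[OF P] by (cases "x = 0\<^sub>v k") (auto intro: less_imp_le)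
qed (use pd P in \<open>simp add: pd_mat_carrier_iff\<close>)

lemma pd_mat_one: "pd_mat (1\<^sub>m k)"
  by (simp add: pd_mat_carrier_iff[of _ k] scalar_prod_self_pos)

lemma quad_form_le_if_psd_diff:
  fixes Phi :: "real mat"
  assumes "Phi \<in> carrier_mat k k" "psd_mat (phi \<cdot>\<^sub>m 1\<^sub>m k - Phi)" "x \<in> carrier_vec k"
  shows "x \<bullet> (Phi *\<^sub>v x) \<le> phi * (x \<bullet> x)"
proof -
  have "0 \<le> x \<bullet> ((phi \<cdot>\<^sub>m 1\<^sub>m k - Phi) *\<^sub>v x)"
    using assms unfolding psd_mat_def by auto
  then show ?thesis
    using assms quad_form_minus[of "phi \<cdot>\<^sub>m 1\<^sub>m k" k Phi x] by (simp add: smult_one_mat_mult_vec)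
qed

lemma discriminant_le_if_nonneg:
  fixes a b c :: real
  assumes "\<And>t. 0 \<le> a + 2*t*b + t^2*c" "0 \<le> c"
  shows "b^2 \<le> a*c"
proof (cases "c = 0")
  case True
  have "b = 0"
  proof (rule ccontr)
    assume "b \<noteq> 0"
    have "0 \<le> a + 2*(-(\<bar>a\<bar>+1)/(2*b))*b" using assms(1)[of "-(\<bar>a\<bar>+1)/(2*b)"] True by simp
    also have "\<dots> = a - (\<bar>a\<bar>+1)" using \<open>b \<noteq> 0\<close> by (simp add: field_simps)
    finally show False by linarith
  qed
  then show ?thesis using True by simp
next
  case False
  then have c: "c > 0" using assms(2) by simp
  have "0 \<le> a + 2*(-b/c)*b + (-b/c)^2*c" by (rule assms(1))
  also have "\<dots> = (a*c - b^2)/c" using c by (simp add: field_simps power2_eq_square)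
  finally show ?thesis using c by (simp add: zero_le_divide_iff)
qed

lemma psd_cauchy_schwarz:
  fixes P :: "real mat"
  assumes P: "P \<in> carrier_mat k k" and psd: "psd_mat P"
    and u: "u \<in> carrier_vec k" and v: "v \<in> carrier_vec k"
  shows "(u \<bullet> (P *\<^sub>v v))^2 \<le> (u \<bullet> (P *\<^sub>v u)) * (v \<bullet> (P *\<^sub>v v))"
proof (rule discriminant_le_if_nonneg)
  have sym: "transpose_mat P = P" and nonneg: "\<And>x. x \<in> carrier_vec k \<Longrightarrow> 0 \<le> x \<bullet> (P *\<^sub>v x)"
    using psd unfolding psd_mat_carrier_iff[OF P] by auto
  show "0 \<le> v \<bullet> (P *\<^sub>v v)" using nonneg v .
  fix t :: real
  have Pu: "P *\<^sub>v u \<in> carrier_vec k" and Pv: "P *\<^sub>v v \<in> carrier_vec k" using P u v by auto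
  have "v \<bullet> (P *\<^sub>v u) = u \<bullet> (P *\<^sub>v v)"
    using transpose_vec_mult_scalar[OF P v u] sym comm_scalar_prod[OF v Pu] by simp
  moreover have "P *\<^sub>v (u + t \<cdot>\<^sub>v v) = P *\<^sub>v u + t \<cdot>\<^sub>v (P *\<^sub>v v)"
    using P u v by (simp add: mult_add_distrib_mat_vec mult_mat_vec)
  ultimately have "(u + t \<cdot>\<^sub>v v) \<bullet> (P *\<^sub>v (u + t \<cdot>\<^sub>v v))
     = u \<bullet> (P *\<^sub>v u) + 2 * t * (u \<bullet> (P *\<^sub>v v)) + t^2 * (v \<bullet> (P *\<^sub>v v))"
    using u v Pu Pv
    by (simp add: add_scalar_prod_distrib[of _ k] scalar_prod_add_distrib[of _ k]
        power2_eq_square algebra_simps)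
  then show "0 \<le> u \<bullet> (P *\<^sub>v u) + 2 * t * (u \<bullet> (P *\<^sub>v v)) + t^2 * (v \<bullet> (P *\<^sub>v v))"
    using nonneg[of "u + t \<cdot>\<^sub>v v"] u v by simp
qed

lemma vec_cauchy_schwarz:
  fixes u v :: "real vec"
  assumes "u \<in> carrier_vec k" "v \<in> carrier_vec k"
  shows "(u \<bullet> v)^2 \<le> (u \<bullet> u) * (v \<bullet> v)"
  using psd_cauchy_schwarz[OF one_carrier_mat pd_mat_imp_psd_mat[OF one_carrier_mat pd_mat_one]] assms
  by simp

definition frob_sq :: "real mat \<Rightarrow> real" where
  "frob_sq M = (\<Sum>i<dim_row M. row M i \<bullet> row M i)"

lemma frob_sq_nonneg: "0 \<le> frob_sq M"
  unfolding frob_sq_def by (auto intro: sum_nonneg simp: scalar_prod_self_nonneg)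

lemma mult_mat_vec_sq_le_frob_sq:
  fixes M :: "real mat"
  assumes v: "v \<in> carrier_vec (dim_col M)"
  shows "(M *\<^sub>v v) \<bullet> (M *\<^sub>v v) \<le> frob_sq M * (v \<bullet> v)"
proof -
  have "(M *\<^sub>v v) \<bullet> (M *\<^sub>v v) = (\<Sum>i<dim_row M. (row M i \<bullet> v)^2)"
    unfolding scalar_prod_def[of "M *\<^sub>v v"] by (auto simp: power2_eq_square lessThan_atLeast0)
  also have "\<dots> \<le> (\<Sum>i<dim_row M. (row M i \<bullet> row M i) * (v \<bullet> v))"
    by (rule sum_mono, rule vec_cauchy_schwarz[of _ "dim_col M"]) (use v in auto)
  also have "\<dots> = frob_sq M * (v \<bullet> v)" unfolding frob_sq_def by (simp add: sum_distrib_right)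
  finally show ?thesis .
qed

lemma quad_form_le_frob_sq:
  fixes P :: "real mat"
  assumes P: "P \<in> carrier_mat k k" and x: "x \<in> carrier_vec k"
  shows "x \<bullet> (P *\<^sub>v x) \<le> (frob_sq P + 1) * (x \<bullet> x)"
proof (rule ccontr)
  let ?F = "frob_sq P" and ?s = "x \<bullet> x" and ?t = "x \<bullet> (P *\<^sub>v x)"
  have F: "0 \<le> ?F" and s: "0 \<le> ?s" using frob_sq_nonneg scalar_prod_self_nonneg by auto
  have Px: "P *\<^sub>v x \<in> carrier_vec k" using P x by auto
  have "?t^2 \<le> ?s * ((P *\<^sub>v x) \<bullet> (P *\<^sub>v x))" by (rule vec_cauchy_schwarz[OF x Px])
  also have "\<dots> \<le> ?s * (?F * ?s)"
    by (rule mult_left_mono[OF mult_mat_vec_sq_le_frob_sq s]) (use P x in auto)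
  also have "\<dots> \<le> ((?F + 1) * ?s)^2" using F s by (simp add: power2_eq_square algebra_simps)
  finally have le: "?t^2 \<le> ((?F + 1) * ?s)^2" .
  assume "\<not> ?t \<le> (?F + 1) * ?s"
  then have "((?F + 1) * ?s)^2 < ?t^2" using F s by (intro power_strict_mono) auto
  with le show False by linarith
qed

lemma psd_mult_vec_sq_le:
  fixes P :: "real mat"
  assumes P: "P \<in> carrier_mat k k" and psd: "psd_mat P"
    and K: "\<And>x. x \<in> carrier_vec k \<Longrightarrow> x \<bullet> (P *\<^sub>v x) \<le> K * (x \<bullet> x)" and K0: "0 \<le> K"
    and w: "w \<in> carrier_vec k"
  shows "(P *\<^sub>v w) \<bullet> (P *\<^sub>v w) \<le> K * (w \<bullet> (P *\<^sub>v w))"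
proof -
  define u where "u = P *\<^sub>v w"
  have u: "u \<in> carrier_vec k" using P w u_def by auto
  have q: "0 \<le> w \<bullet> (P *\<^sub>v w)" using psd P w unfolding psd_mat_carrier_iff[OF P] by auto
  have "(u \<bullet> u)^2 \<le> (u \<bullet> (P *\<^sub>v u)) * (w \<bullet> (P *\<^sub>v w))"
    using psd_cauchy_schwarz[OF P psd u w] by (simp add: u_def)
  also have "\<dots> \<le> (K * (u \<bullet> u)) * (w \<bullet> (P *\<^sub>v w))" by (rule mult_right_mono[OF K[OF u] q])
  finally have "(u \<bullet> u) * (u \<bullet> u) \<le> (u \<bullet> u) * (K * (w \<bullet> (P *\<^sub>v w)))"
    by (simp add: power2_eq_square algebra_simps)
  then have "u \<bullet> u \<le> K * (w \<bullet> (P *\<^sub>v w)) \<or> u \<bullet> u = 0"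
    using scalar_prod_self_nonneg[of u] by (metis less_eq_real_def mult_le_cancel_left_pos)
  then show ?thesis using K0 q u_def by auto
qed

lemma psd_mult_vec_sq_le_if_psd_diff:
  fixes Phi :: "real mat"
  assumes P: "Phi \<in> carrier_mat k k" and psd: "psd_mat Phi"
    and bound: "psd_mat (phi \<cdot>\<^sub>m 1\<^sub>m k - Phi)" and phi: "0 \<le> phi" and w: "w \<in> carrier_vec k"
  shows "(Phi *\<^sub>v w) \<bullet> (Phi *\<^sub>v w) \<le> phi * phi * (w \<bullet> w)"
proof -
  note le = quad_form_le_if_psd_diff[OF P bound]
  have "(Phi *\<^sub>v w) \<bullet> (Phi *\<^sub>v w) \<le> phi * (w \<bullet> (Phi *\<^sub>v w))"
    by (rule psd_mult_vec_sq_le[OF P psd le phi w])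
  also have "\<dots> \<le> phi * (phi * (w \<bullet> w))" using le[OF w] phi by (simp add: mult_left_mono)
  finally show ?thesis by (simp add: algebra_simps)
qed

section \<open>Inverses and positive definiteness\<close>

lemma inv_mat_if_injective:
  fixes X :: "real mat"
  assumes X: "X \<in> carrier_mat k k"
    and inj: "\<And>v. v \<in> carrier_vec k \<Longrightarrow> X *\<^sub>v v = 0\<^sub>v k \<Longrightarrow> v = 0\<^sub>v k"
  shows "inv_mat X \<in> carrier_mat k k" and "X * inv_mat X = 1\<^sub>m k" and "inv_mat X * X = 1\<^sub>m k"
proof -
  have "det X \<noteq> 0" using det_0_iff_vec_prod_zero[OF X] inj by auto
  from det_non_zero_imp_unit[OF X this, of undefined]
  obtain Y where "Y \<in> carrier_mat k k" "Y * X = 1\<^sub>m k" "X * Y = 1\<^sub>m k"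
    unfolding Units_def ring_mat_def by auto
  then have "\<exists>Y. Y \<in> carrier_mat (dim_row X) (dim_row X) \<and> inverts_mat X Y \<and> inverts_mat Y X"
    using X unfolding inverts_mat_def by auto
  from someI_ex[OF this]
  show "inv_mat X \<in> carrier_mat k k" "X * inv_mat X = 1\<^sub>m k" "inv_mat X * X = 1\<^sub>m k"
    unfolding inv_mat_def inverts_mat_def using X by auto
qed

lemma inv_mat_eqI:
  fixes X Y :: "real mat"
  assumes X: "X \<in> carrier_mat k k" and Y: "Y \<in> carrier_mat k k" and XY: "X * Y = 1\<^sub>m k"
  shows "inv_mat X = Y"
proof -
  have YX: "Y * X = 1\<^sub>m k" by (rule mat_mult_left_right_inverse[OF X Y XY])
  have "v = 0\<^sub>v k" if v: "v \<in> carrier_vec k" "X *\<^sub>v v = 0\<^sub>v k" for v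
  proof -
    have "v = (Y * X) *\<^sub>v v" using YX v by simp
    also have "\<dots> = Y *\<^sub>v (X *\<^sub>v v)" using X Y v by simp
    finally show ?thesis using v Y by simp
  qed
  note I = inv_mat_if_injective[OF X this]
  have "inv_mat X = inv_mat X * (X * Y)" using I XY by simp
  also have "\<dots> = (inv_mat X * X) * Y" by (rule assoc_mult_mat[OF I(1) X Y, symmetric])
  also have "\<dots> = Y" using I Y by simp
  finally show ?thesis .
qed

lemma transpose_inv_mat:
  fixes X :: "real mat"
  assumes X: "X \<in> carrier_mat k k"
    and inj: "\<And>v. v \<in> carrier_vec k \<Longrightarrow> X *\<^sub>v v = 0\<^sub>v k \<Longrightarrow> v = 0\<^sub>v k"
  shows "transpose_mat (inv_mat X) = inv_mat (transpose_mat X)"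
proof -
  note I = inv_mat_if_injective[OF X inj]
  have "transpose_mat X * transpose_mat (inv_mat X) = 1\<^sub>m k"
    using transpose_mult[OF I(1) X] I by simp
  then show ?thesis using inv_mat_eqI[of "transpose_mat X" k "transpose_mat (inv_mat X)"] X I by simp
qed

lemma pd_mat_injective:
  fixes P :: "real mat"
  assumes "P \<in> carrier_mat k k" "pd_mat P" "v \<in> carrier_vec k" "P *\<^sub>v v = 0\<^sub>v k"
  shows "v = 0\<^sub>v k"
  using assms unfolding pd_mat_carrier_iff[OF assms(1)] by force

lemma pd_mat_inv:
  fixes P :: "real mat"
  assumes P: "P \<in> carrier_mat k k" and pd: "pd_mat P"
  shows "pd_mat (inv_mat P)" and "inv_mat P \<in> carrier_mat k k"
    and "P * inv_mat P = 1\<^sub>m k" and "inv_mat P * P = 1\<^sub>m k"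
proof -
  note inj = pd_mat_injective[OF P pd]
  note I = inv_mat_if_injective[OF P inj]
  show "inv_mat P \<in> carrier_mat k k" "P * inv_mat P = 1\<^sub>m k" "inv_mat P * P = 1\<^sub>m k" using I by auto
  have sym: "transpose_mat P = P" and pos: "\<And>y. y \<in> carrier_vec k \<Longrightarrow> y \<noteq> 0\<^sub>v k \<Longrightarrow> 0 < y \<bullet> (P *\<^sub>v y)"
    using pd unfolding pd_mat_carrier_iff[OF P] by auto
  have "0 < x \<bullet> (inv_mat P *\<^sub>v x)" if x: "x \<in> carrier_vec k" "x \<noteq> 0\<^sub>v k" for x
  proof -
    define y where "y = inv_mat P *\<^sub>v x"
    have y: "y \<in> carrier_vec k" using I x y_def by auto
    have "P *\<^sub>v y = (P * inv_mat P) *\<^sub>v x"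
      unfolding y_def by (rule assoc_mult_mat_vec[symmetric]) (use P I x in auto)
    then have xy: "x = P *\<^sub>v y" using I x by simp
    then have "y \<noteq> 0\<^sub>v k" using x P by auto
    then have "0 < y \<bullet> (P *\<^sub>v y)" using pos y by blast
    also have "y \<bullet> (P *\<^sub>v y) = x \<bullet> (inv_mat P *\<^sub>v x)"
      unfolding xy[symmetric] y_def[symmetric] using comm_scalar_prod[OF y x(1)] .
    finally show ?thesis .
  qed
  moreover have "transpose_mat (inv_mat P) = inv_mat P"
    using transpose_inv_mat[OF P inj] sym by simp
  ultimately show "pd_mat (inv_mat P)" using pd_mat_carrier_iff[OF I(1)] by blast
qed

lemma pd_mat_lower_bound:
  fixes P :: "real mat"
  assumes P: "P \<in> carrier_mat k k" and pd: "pd_mat P"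
  obtains \<mu> where "\<mu> > 0" and "\<And>x. x \<in> carrier_vec k \<Longrightarrow> \<mu> * (x \<bullet> x) \<le> x \<bullet> (P *\<^sub>v x)"
proof -
  note I = pd_mat_inv[OF P pd]
  note psd = pd_mat_imp_psd_mat[OF P pd]
  define K where "K = frob_sq P + 1"
  define F where "F = frob_sq (inv_mat P)"
  have K0: "0 \<le> K" and F0: "0 \<le> F" unfolding K_def F_def using frob_sq_nonneg by (auto intro: add_nonneg_nonneg)
  have "x \<bullet> x \<le> (F * K + 1) * (x \<bullet> (P *\<^sub>v x))" if x: "x \<in> carrier_vec k" for x
  proof -
    have Px: "P *\<^sub>v x \<in> carrier_vec k" using P x by auto
    have q: "0 \<le> x \<bullet> (P *\<^sub>v x)" using psd P x unfolding psd_mat_carrier_iff[OF P] by auto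
    have "x = inv_mat P *\<^sub>v (P *\<^sub>v x)" using I P x by (metis assoc_mult_mat_vec one_mult_mat_vec)
    then have "x \<bullet> x \<le> F * ((P *\<^sub>v x) \<bullet> (P *\<^sub>v x))"
      unfolding F_def using mult_mat_vec_sq_le_frob_sq[of "P *\<^sub>v x" "inv_mat P"] I Px by simp
    also have "\<dots> \<le> F * (K * (x \<bullet> (P *\<^sub>v x)))"
      using psd_mult_vec_sq_le[OF P psd quad_form_le_frob_sq[OF P] _ x] F0 K0
      unfolding K_def by (simp add: mult_left_mono)
    also have "\<dots> \<le> (F * K + 1) * (x \<bullet> (P *\<^sub>v x))" using q by (simp add: algebra_simps)
    finally show ?thesis .
  qed
  moreover have FK: "0 \<le> F * K" using F0 K0 by simp
  ultimately show ?thesis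
    by (intro that[of "1 / (F * K + 1)"]) (use FK in \<open>simp_all add: field_simps\<close>)
qed

lemma pd_mat_congruence:
  fixes R X :: "real mat"
  assumes R: "R \<in> carrier_mat r k" and X: "X \<in> carrier_mat k k" and pd: "pd_mat X"
    and inj: "\<And>x. x \<in> carrier_vec r \<Longrightarrow> transpose_mat R *\<^sub>v x = 0\<^sub>v k \<Longrightarrow> x = 0\<^sub>v r"
  shows "pd_mat (R * X * transpose_mat R)"
proof -
  have "R * X * transpose_mat R \<in> carrier_mat r r" using R X by auto
  moreover have "transpose_mat (R * X * transpose_mat R) = R * X * transpose_mat R"
    using transpose_congruence[OF R X] pd X by (simp add: pd_mat_carrier_iff)
  moreover have "0 < x \<bullet> ((R * X * transpose_mat R) *\<^sub>v x)"
    if "x \<in> carrier_vec r" "x \<noteq> 0\<^sub>v r" for x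
  proof -
    have "transpose_mat R *\<^sub>v x \<in> carrier_vec k" using R that by auto
    then show ?thesis
      using that inj[of x] pd unfolding quad_form_congruence[OF R X that(1)] pd_mat_carrier_iff[OF X]
      by blast
  qed
  ultimately show ?thesis by (simp add: pd_mat_carrier_iff)
qed

lemma psd_mat_congruence:
  fixes R X :: "real mat"
  assumes R: "R \<in> carrier_mat r k" and X: "X \<in> carrier_mat k k" and psd: "psd_mat X"
  shows "psd_mat (R * X * transpose_mat R)"
proof -
  have "R * X * transpose_mat R \<in> carrier_mat r r" using R X by auto
  moreover have "transpose_mat (R * X * transpose_mat R) = R * X * transpose_mat R"
    using transpose_congruence[OF R X] psd X by (simp add: psd_mat_carrier_iff)
  moreover have "0 \<le> x \<bullet> ((R * X * transpose_mat R) *\<^sub>v x)" if "x \<in> carrier_vec r" for x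
    using that psd X R unfolding quad_form_congruence[OF R X that] psd_mat_carrier_iff[OF X] by auto
  ultimately show ?thesis by (simp add: psd_mat_carrier_iff)
qed

lemma pd_mat_add_psd:
  fixes X Y :: "real mat"
  assumes X: "X \<in> carrier_mat k k" and Y: "Y \<in> carrier_mat k k" and "pd_mat X" "psd_mat Y"
  shows "pd_mat (X + Y)"
  using assms quad_form_add[OF X Y] unfolding pd_mat_carrier_iff[OF X] psd_mat_carrier_iff[OF Y]
  by (auto simp: pd_mat_carrier_iff[of _ k] transpose_add[OF X Y] add_pos_nonneg)

lemma sigma1_nonneg_if_singular:
  fixes M :: "real mat"
  assumes M: "M \<in> carrier_mat k k" and v: "v \<in> carrier_vec k" "v \<noteq> 0\<^sub>v k" and Mv: "M *\<^sub>v v = 0\<^sub>v k"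
  shows "0 \<le> sigma1 M"
proof -
  let ?P = "transpose_mat M * M"
  have P: "?P \<in> carrier_mat k k" using M by auto
  have "?P *\<^sub>v v = 0 \<cdot>\<^sub>v v" using M v Mv by auto
  then have eig: "eigenvalue ?P 0" using P v M unfolding eigenvalue_def eigenvector_def by auto
  have "char_poly ?P \<noteq> 0" using degree_monic_char_poly[OF P] by auto
  then have "finite {c. eigenvalue ?P c}" using poly_roots_finite eigenvalue_root_char_poly[OF P] by simp
  then show ?thesis using eig unfolding sigma1_def by (simp add: Max_ge_iff)
qed

section \<open>Perturbations of positive definite matrices\<close>

lemma one_minus_mult_mult_vec:
  fixes M Phi :: "real mat"
  assumes M: "M \<in> carrier_mat k k" and P: "Phi \<in> carrier_mat k k" and v: "v \<in> carrier_vec k"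
  shows "(1\<^sub>m k - Phi * M) *\<^sub>v v = v - Phi *\<^sub>v (M *\<^sub>v v)"
proof -
  have PM: "Phi * M \<in> carrier_mat k k" using P M by auto
  have "(1\<^sub>m k - Phi * M) *\<^sub>v v = 1\<^sub>m k *\<^sub>v v - (Phi * M) *\<^sub>v v"
    by (rule minus_mult_distrib_mat_vec[OF one_carrier_mat PM v])
  also have "(Phi * M) *\<^sub>v v = Phi *\<^sub>v (M *\<^sub>v v)" by (rule assoc_mult_mat_vec[OF P M v])
  finally show ?thesis using v by simp
qed

lemma pd_mat_diff_congruence:
  fixes G L Phi :: "real mat"
  assumes G: "G \<in> carrier_mat j j" and L: "L \<in> carrier_mat k j" and P: "Phi \<in> carrier_mat k k"
    and G_sym: "transpose_mat G = G" and G_ge: "\<And>x. x \<in> carrier_vec j \<Longrightarrow> x \<bullet> x \<le> x \<bullet> (G *\<^sub>v x)"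
    and P_sym: "transpose_mat Phi = Phi" and bound: "psd_mat (phi \<cdot>\<^sub>m 1\<^sub>m k - Phi)"
    and phi: "0 \<le> phi" and small: "phi * frob_sq L < 1"
  shows "pd_mat (G - transpose_mat L * Phi * L)"
proof -
  let ?K = "transpose_mat L * Phi * L"
  have LT: "transpose_mat L \<in> carrier_mat j k" using L by auto
  have K: "?K \<in> carrier_mat j j" using L P by auto
  have "transpose_mat ?K = ?K" using transpose_congruence[OF LT P] P_sym by simp
  then have sym: "transpose_mat (G - ?K) = G - ?K" using transpose_minus[OF G K] G_sym by simp
  have "0 < x \<bullet> ((G - ?K) *\<^sub>v x)" if x: "x \<in> carrier_vec j" "x \<noteq> 0\<^sub>v j" for x
  proof -
    have Lx: "L *\<^sub>v x \<in> carrier_vec k" using L x by auto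
    have "x \<bullet> (?K *\<^sub>v x) = (L *\<^sub>v x) \<bullet> (Phi *\<^sub>v (L *\<^sub>v x))"
      using quad_form_congruence[OF LT P x(1)] by simp
    also have "\<dots> \<le> phi * ((L *\<^sub>v x) \<bullet> (L *\<^sub>v x))" by (rule quad_form_le_if_psd_diff[OF P bound Lx])
    also have "\<dots> \<le> phi * (frob_sq L * (x \<bullet> x))"
      by (rule mult_left_mono[OF mult_mat_vec_sq_le_frob_sq phi]) (use L x in auto)
    also have "\<dots> < x \<bullet> x" using small scalar_prod_self_pos[OF x] by simp
    finally show ?thesis using G_ge[OF x(1)] quad_form_minus[OF G K x(1)] by linarith
  qed
  moreover have "G - ?K \<in> carrier_mat j j" using minus_carrier_mat[OF K] G by simp
  ultimately show ?thesis using sym pd_mat_carrier_iff by blast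
qed

lemma pd_mat_add_congruence:
  fixes X J S :: "real mat"
  assumes X: "X \<in> carrier_mat n n" and J: "J \<in> carrier_mat k n" and S: "S \<in> carrier_mat k k"
    and X_sym: "transpose_mat X = X" and X_ge: "\<And>x. x \<in> carrier_vec n \<Longrightarrow> \<mu> * (x \<bullet> x) \<le> x \<bullet> (X *\<^sub>v x)"
    and S_sym: "transpose_mat S = S" and S_ge: "\<And>y. y \<in> carrier_vec k \<Longrightarrow> - (c * (y \<bullet> y)) \<le> y \<bullet> (S *\<^sub>v y)"
    and c: "0 \<le> c" and small: "c * frob_sq J < \<mu>"
  shows "pd_mat (X + transpose_mat J * S * J)"
proof -
  let ?K = "transpose_mat J * S * J"
  have JT: "transpose_mat J \<in> carrier_mat n k" using J by auto
  have K: "?K \<in> carrier_mat n n" using J S by auto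
  have "transpose_mat ?K = ?K" using transpose_congruence[OF JT S] S_sym by simp
  then have sym: "transpose_mat (X + ?K) = X + ?K" using transpose_add[OF X K] X_sym by simp
  have "0 < x \<bullet> ((X + ?K) *\<^sub>v x)" if x: "x \<in> carrier_vec n" "x \<noteq> 0\<^sub>v n" for x
  proof -
    have Jx: "J *\<^sub>v x \<in> carrier_vec k" using J x by auto
    have "c * ((J *\<^sub>v x) \<bullet> (J *\<^sub>v x)) \<le> c * (frob_sq J * (x \<bullet> x))"
      by (rule mult_left_mono[OF mult_mat_vec_sq_le_frob_sq c]) (use J x in auto)
    also have "\<dots> < \<mu> * (x \<bullet> x)" using small scalar_prod_self_pos[OF x] by simp
    finally have "c * ((J *\<^sub>v x) \<bullet> (J *\<^sub>v x)) < \<mu> * (x \<bullet> x)" .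
    moreover have "x \<bullet> (?K *\<^sub>v x) = (J *\<^sub>v x) \<bullet> (S *\<^sub>v (J *\<^sub>v x))"
      using quad_form_congruence[OF JT S x(1)] by simp
    ultimately show ?thesis
      using X_ge[OF x(1)] S_ge[OF Jx] quad_form_add[OF X K x(1)] by linarith
  qed
  moreover have "X + ?K \<in> carrier_mat n n" using add_carrier_mat[OF K] by simp
  ultimately show ?thesis using sym pd_mat_carrier_iff by blast
qed

lemma one_minus_mult_injective:
  fixes M Phi :: "real mat"
  assumes M: "M \<in> carrier_mat k k" and P: "Phi \<in> carrier_mat k k" and psd: "psd_mat Phi"
    and bound: "psd_mat (phi \<cdot>\<^sub>m 1\<^sub>m k - Phi)" and phi: "0 \<le> phi" and small: "4 * phi^2 * frob_sq M \<le> 1"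
    and v: "v \<in> carrier_vec k" and Tv: "(1\<^sub>m k - Phi * M) *\<^sub>v v = 0\<^sub>v k"
  shows "v = 0\<^sub>v k"
proof -
  have Mv: "M *\<^sub>v v \<in> carrier_vec k" using M v by auto
  have "v - Phi *\<^sub>v (M *\<^sub>v v) = 0\<^sub>v k" using Tv one_minus_mult_mult_vec[OF M P v] by simp
  then have "v = Phi *\<^sub>v (M *\<^sub>v v)" using vec_diff_eq_iff[OF v _ zero_carrier_vec] P Mv by auto
  then have "v \<bullet> v \<le> phi * phi * ((M *\<^sub>v v) \<bullet> (M *\<^sub>v v))"
    using psd_mult_vec_sq_le_if_psd_diff[OF P psd bound phi Mv] by simp
  also have "\<dots> \<le> phi * phi * (frob_sq M * (v \<bullet> v))"
    by (rule mult_left_mono[OF mult_mat_vec_sq_le_frob_sq]) (use M v in auto)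
  also have "\<dots> \<le> (1/4) * (v \<bullet> v)"
    using mult_right_mono[OF small scalar_prod_self_nonneg[of v]] by (simp add: power2_eq_square)
  finally show ?thesis using scalar_prod_self_nonneg[of v] scalar_prod_self_eq_0_iff[OF v] by linarith
qed

lemma one_minus_mult_intertwines:
  fixes M Phi :: "real mat"
  assumes M: "M \<in> carrier_mat k k" and P: "Phi \<in> carrier_mat k k"
    and M_sym: "transpose_mat M = M" and P_sym: "transpose_mat Phi = Phi"
  shows "(1\<^sub>m k - Phi * M) * Phi = Phi * transpose_mat (1\<^sub>m k - Phi * M)"
proof -
  have PM: "Phi * M \<in> carrier_mat k k" and MP: "M * Phi \<in> carrier_mat k k" using P M by auto
  have "transpose_mat (1\<^sub>m k - Phi * M) = 1\<^sub>m k - M * Phi"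
    using transpose_minus[OF one_carrier_mat PM] transpose_mult[OF P M] M_sym P_sym by simp
  moreover have "(1\<^sub>m k - Phi * M) * Phi = Phi - Phi * (M * Phi)"
    using minus_mult_distrib_mat[OF one_carrier_mat PM P] P M by (simp add: assoc_mult_mat[OF P M P])
  moreover have "Phi * (1\<^sub>m k - M * Phi) = Phi - Phi * (M * Phi)"
    using mult_minus_distrib_mat[OF P one_carrier_mat MP] P by simp
  ultimately show ?thesis by simp
qed

lemma transpose_inv_mat_mult:
  fixes T Phi :: "real mat"
  assumes T: "T \<in> carrier_mat k k" and P: "Phi \<in> carrier_mat k k"
    and inj: "\<And>v. v \<in> carrier_vec k \<Longrightarrow> T *\<^sub>v v = 0\<^sub>v k \<Longrightarrow> v = 0\<^sub>v k"
    and P_sym: "transpose_mat Phi = Phi" and comm: "T * Phi = Phi * transpose_mat T"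
  shows "transpose_mat (inv_mat T * Phi) = inv_mat T * Phi"
proof -
  note I = inv_mat_if_injective[OF T inj]
  let ?Ti = "inv_mat T"
  have TT: "transpose_mat T * transpose_mat ?Ti = 1\<^sub>m k" using transpose_mult[OF I(1) T] I(3) by simp
  have Ti: "?Ti \<in> carrier_mat k k" and TiT: "transpose_mat ?Ti \<in> carrier_mat k k" using I by auto
  have "?Ti * Phi = (?Ti * Phi) * (transpose_mat T * transpose_mat ?Ti)" using TT Ti P by simp
  also have "\<dots> = ?Ti * ((Phi * transpose_mat T) * transpose_mat ?Ti)"
    using Ti TiT T P by (simp add: assoc_mult_mat[of _ k k _ k _ k])
  also have "\<dots> = (?Ti * T) * (Phi * transpose_mat ?Ti)"
    unfolding comm[symmetric] using Ti TiT T P by (simp add: assoc_mult_mat[of _ k k _ k _ k])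
  also have "\<dots> = Phi * transpose_mat ?Ti" using I P TiT by simp
  finally show ?thesis using transpose_mult[OF I(1) P] P_sym by simp
qed

lemma quad_form_resolvent_le:
  fixes M Phi :: "real mat"
  assumes M: "M \<in> carrier_mat k k" and M_psd: "psd_mat M" and P: "Phi \<in> carrier_mat k k"
    and psd: "psd_mat Phi" and bound: "psd_mat (phi \<cdot>\<^sub>m 1\<^sub>m k - Phi)" and phi: "0 \<le> phi"
    and small: "4 * phi^2 * frob_sq M \<le> 1" and y: "y \<in> carrier_vec k"
  shows "y \<bullet> ((inv_mat (1\<^sub>m k - Phi * M) * Phi) *\<^sub>v y) \<le> 4 * phi * (y \<bullet> y)"
proof -
  let ?T = "1\<^sub>m k - Phi * M"
  have T: "?T \<in> carrier_mat k k" using P M by auto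
  note I = inv_mat_if_injective[OF T one_minus_mult_injective[OF M P psd bound phi small]]
  \<comment> \<open>With \<open>w = y + Mz\<close> one has \<open>z = \<Phi>w\<close>, hence \<open>y\<bullet>z \<le> w\<bullet>\<Phi>w \<le> \<phi>|w|\<^sup>2\<close> and \<open>|w|\<^sup>2 \<le> 4|y|\<^sup>2\<close>.\<close>
  define z where "z = inv_mat ?T *\<^sub>v (Phi *\<^sub>v y)"
  define w where "w = y + M *\<^sub>v z"
  have Py: "Phi *\<^sub>v y \<in> carrier_vec k" using P y by auto
  have z: "z \<in> carrier_vec k" unfolding z_def using I(1) Py by auto
  have Mz: "M *\<^sub>v z \<in> carrier_vec k" and PMz: "Phi *\<^sub>v (M *\<^sub>v z) \<in> carrier_vec k"
    using M P z by auto
  have w: "w \<in> carrier_vec k" unfolding w_def using y Mz by auto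
  have "?T *\<^sub>v z = (?T * inv_mat ?T) *\<^sub>v (Phi *\<^sub>v y)"
    unfolding z_def by (rule assoc_mult_mat_vec[OF T I(1) Py, symmetric])
  then have "z - Phi *\<^sub>v (M *\<^sub>v z) = Phi *\<^sub>v y"
    using one_minus_mult_mult_vec[OF M P z] I(2) Py by simp
  then have "z = Phi *\<^sub>v y + Phi *\<^sub>v (M *\<^sub>v z)" using vec_diff_eq_iff[OF z PMz Py] by blast
  then have zw: "z = Phi *\<^sub>v w" unfolding w_def by (simp add: mult_add_distrib_mat_vec[OF P y Mz])
  have "w \<bullet> z = y \<bullet> z + (M *\<^sub>v z) \<bullet> z" unfolding w_def by (rule add_scalar_prod_distrib[OF y Mz z])
  moreover have "0 \<le> (M *\<^sub>v z) \<bullet> z"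
    using M_psd z comm_scalar_prod[OF Mz z] unfolding psd_mat_carrier_iff[OF M] by simp
  moreover have "w \<bullet> z \<le> phi * (w \<bullet> w)" using quad_form_le_if_psd_diff[OF P bound w] zw by simp
  ultimately have yz: "y \<bullet> z \<le> phi * (w \<bullet> w)" by linarith
  have "w \<bullet> w \<le> 2 * (y \<bullet> y) + 2 * ((M *\<^sub>v z) \<bullet> (M *\<^sub>v z))"
    unfolding w_def by (rule scalar_prod_add_self_le[OF y Mz])
  also have "(M *\<^sub>v z) \<bullet> (M *\<^sub>v z) \<le> frob_sq M * (z \<bullet> z)"
    by (rule mult_mat_vec_sq_le_frob_sq) (use M z in auto)
  also have "z \<bullet> z \<le> phi * phi * (w \<bullet> w)"
    using psd_mult_vec_sq_le_if_psd_diff[OF P psd bound phi w] zw by simp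
  finally have "w \<bullet> w \<le> 2 * (y \<bullet> y) + 2 * (frob_sq M * (phi * phi * (w \<bullet> w)))"
    using frob_sq_nonneg[of M] by (simp add: mult_left_mono)
  moreover have "4 * (frob_sq M * (phi * phi * (w \<bullet> w))) \<le> w \<bullet> w"
    using mult_right_mono[OF small scalar_prod_self_nonneg[of w]] by (simp add: power2_eq_square mult_ac)
  ultimately have "w \<bullet> w \<le> 4 * (y \<bullet> y)" by linarith
  then have "phi * (w \<bullet> w) \<le> phi * (4 * (y \<bullet> y))" using phi by (rule mult_left_mono)
  moreover have "(inv_mat ?T * Phi) *\<^sub>v y = z" unfolding z_def by (rule assoc_mult_mat_vec[OF I(1) P y])
  ultimately show ?thesis using yz by simp
qed

section \<open>Matrix powers, rank and block matrices\<close>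

lemma pow_mat_Suc_left:
  fixes A :: "real mat"
  assumes A: "A \<in> carrier_mat n n"
  shows "A ^\<^sub>m Suc k = A * A ^\<^sub>m k"
proof (induct k)
  case (Suc k)
  have "A ^\<^sub>m Suc (Suc k) = (A * A ^\<^sub>m k) * A" using Suc by simp
  also have "\<dots> = A * (A ^\<^sub>m k * A)" using A by (simp add: assoc_mult_mat[of _ n n _ n _ n])
  finally show ?case by simp
qed (use A in simp)

lemma transpose_pow_mat:
  fixes A :: "real mat"
  assumes A: "A \<in> carrier_mat n n"
  shows "transpose_mat (A ^\<^sub>m k) = transpose_mat A ^\<^sub>m k"
proof (induct k)
  case (Suc k)
  have "transpose_mat (A ^\<^sub>m Suc k) = transpose_mat A * transpose_mat (A ^\<^sub>m k)"
    using A by (simp add: transpose_mult[of _ n n _ n])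
  also have "\<dots> = transpose_mat A ^\<^sub>m Suc k" using Suc pow_mat_Suc_left[of "transpose_mat A" n k] A by simp
  finally show ?case .
qed (use A in simp)

lemma full_rank_orthogonal_cols_imp_zero:
  fixes M :: "real mat"
  assumes M: "M \<in> carrier_mat k c" and rk: "vec_space.rank k M = k"
    and x: "x \<in> carrier_vec k" and orth: "\<And>j. j < c \<Longrightarrow> col M j \<bullet> x = 0"
  shows "x = 0\<^sub>v k"
proof -
  interpret V: vec_space "TYPE(real)" k .
  have "V.lin_indpt {}" by (rule V.finite_lin_indpt2) auto
  then obtain S where S: "maximal S (\<lambda>T. T \<subseteq> set (cols M) \<and> V.lin_indpt T)"
    using maximal_exists[of "(\<lambda>T. T \<subseteq> set (cols M) \<and> V.lin_indpt T)" "card (set (cols M))" "{}"]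
    by (auto intro: card_mono dest: finite_subset)
  have card: "card S = k" using V.rank_card_indpt[OF M S] rk by simp
  have sub: "S \<subseteq> set (cols M)" and li: "V.lin_indpt S" using S unfolding maximal_def by auto
  have car: "S \<subseteq> carrier_vec k" using sub M cols_dim by blast
  have "V.basis S"
    by (rule V.dim_li_is_basis) (use V.fin_dim finite_subset[OF sub] car li card V.dim_is_n in auto)
  then have span: "V.span S = carrier_vec k" unfolding V.basis_def by auto
  have "x \<in> V.orthogonal_complement S"
    unfolding V.orthogonal_complement_def
  proof (intro CollectI conjI ballI)
    fix y assume "y \<in> S"
    then obtain j where "j < length (cols M)" "y = cols M ! j" using sub by (metis in_set_conv_nth subsetD)
    then show "x \<bullet> y = 0" using orth M comm_scalar_prod[OF x, of y] by auto
  qed (rule x)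
  then have "x \<in> V.orthogonal_complement (V.span S)" using V.in_orthogonal_complement_span[OF car] by simp
  then have "x \<bullet> x = 0" using span x unfolding V.orthogonal_complement_def by auto
  then show ?thesis using scalar_prod_self_eq_0_iff[OF x] by simp
qed

definition vec_block :: "nat \<Rightarrow> nat \<Rightarrow> real vec \<Rightarrow> real vec" where
  "vec_block c j x = vec c (\<lambda>b. x $ (j * c + b))"

lemma vec_block_carrier[simp]: "vec_block c j x \<in> carrier_vec c"
  unfolding vec_block_def by simp

lemma vec_block_0[simp]: "x \<in> carrier_vec c \<Longrightarrow> vec_block c 0 x = x"
  unfolding vec_block_def by (rule eq_vecI) auto

lemma block_index_decomp:
  fixes t c nc :: nat
  assumes "t < c * nc"
  shows "t = t div c * c + t mod c" and "t div c < nc" and "t mod c < c"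
  using assms less_mult_imp_div_less[of t nc c]
  by (auto simp: mult.commute) (metis mult_is_0 not_less_zero mod_less_divisor neq0_conv)

lemma block_index_less:
  fixes j nc b c :: nat
  assumes "j < nc" "b < c"
  shows "j * c + b < c * nc"
proof -
  have "j * c + b < (j + 1) * c" using assms by simp
  also have "\<dots> \<le> nc * c" using assms by (intro mult_le_mono1) simp
  finally show ?thesis by (simp add: mult.commute)
qed

lemma vec_eq_zero_if_blocks_zero:
  assumes x: "x \<in> carrier_vec (c * nc)" and zero: "\<And>j. j < nc \<Longrightarrow> vec_block c j x = 0\<^sub>v c"
  shows "x = 0\<^sub>v (c * nc)"
proof (rule eq_vecI)
  fix t assume "t < dim_vec (0\<^sub>v (c * nc))"
  then have t: "t < c * nc" by simp
  note d = block_index_decomp[OF t]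
  have "x $ t = vec_block c (t div c) x $ (t mod c)"
    unfolding vec_block_def using d by (simp add: mult.commute)
  then show "x $ t = 0\<^sub>v (c * nc) $ t" using zero[OF d(2)] d(3) t by simp
qed (use x in simp)

lemma sum_lessThan_mult_split:
  fixes g :: "nat \<Rightarrow> real"
  shows "(\<Sum>t<c * nc. g t) = (\<Sum>j<nc. \<Sum>b<c. g (j * c + b))"
proof -
  have "(\<Sum>t<c * nc. g t) = (\<Sum>j<nc. sum g {j * c..<j * c + c})"
    using sum.nat_group[of g c nc] by (simp add: mult.commute)
  also have "\<dots> = (\<Sum>j<nc. \<Sum>b<c. g (j * c + b))"
  proof (rule sum.cong[OF refl])
    fix j
    show "sum g {j * c..<j * c + c} = (\<Sum>b<c. g (j * c + b))"
      using sum.shift_bounds_nat_ivl[of g 0 "j * c" c] by (simp add: lessThan_atLeast0 add.commute)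
  qed
  finally show ?thesis .
qed

lemma block_mat_mult_vec:
  assumes f: "\<And>i j. i < nr \<Longrightarrow> j < nc \<Longrightarrow> f i j \<in> carrier_mat r c"
    and x: "x \<in> carrier_vec (c * nc)" and i: "i < nr" and a: "a < r"
  shows "(block_mat r c nr nc f *\<^sub>v x) $ (i * r + a) = (\<Sum>j<nc. (f i j *\<^sub>v vec_block c j x) $ a)"
proof -
  have ia: "i * r + a < r * nr" by (rule block_index_less[OF i a])
  have dv: "(i * r + a) div r = i" "(i * r + a) mod r = a" using a by auto
  have "(block_mat r c nr nc f *\<^sub>v x) $ (i * r + a) = (\<Sum>t<c * nc. f i (t div c) $$ (a, t mod c) * x $ t)"
    unfolding block_mat_def using ia x dv
    by (auto simp: scalar_prod_def row_def lessThan_atLeast0 intro!: sum.cong)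
  also have "\<dots> = (\<Sum>j<nc. \<Sum>b<c. f i j $$ (a, b) * x $ (j * c + b))"
    unfolding sum_lessThan_mult_split by (intro sum.cong refl) auto
  also have "\<dots> = (\<Sum>j<nc. (f i j *\<^sub>v vec_block c j x) $ a)"
  proof (intro sum.cong refl)
    fix j assume "j \<in> {..<nc}"
    then have "f i j \<in> carrier_mat r c" using f i by auto
    then show "(\<Sum>b<c. f i j $$ (a, b) * x $ (j * c + b)) = (f i j *\<^sub>v vec_block c j x) $ a"
      using a by (auto simp: scalar_prod_def vec_block_def row_def lessThan_atLeast0 intro!: sum.cong)
  qed
  finally show ?thesis .
qed

lemma transpose_block_mat:
  assumes f: "\<And>i j. i < nr \<Longrightarrow> j < nc \<Longrightarrow> f i j \<in> carrier_mat r c" and r: "r > 0" and c: "c > 0"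
  shows "transpose_mat (block_mat r c nr nc f) = block_mat c r nc nr (\<lambda>j i. transpose_mat (f i j))"
proof (rule eq_matI)
  fix s t assume "s < dim_row (block_mat c r nc nr (\<lambda>j i. transpose_mat (f i j)))"
    and "t < dim_col (block_mat c r nc nr (\<lambda>j i. transpose_mat (f i j)))"
  then have s: "s < c * nc" and t: "t < r * nr" unfolding block_mat_def by auto
  have "f (t div r) (s div c) \<in> carrier_mat r c"
    using f block_index_decomp(2)[OF s] block_index_decomp(2)[OF t] by auto
  then show "transpose_mat (block_mat r c nr nc f) $$ (s, t)
      = block_mat c r nc nr (\<lambda>j i. transpose_mat (f i j)) $$ (s, t)"
    unfolding block_mat_def using s t r c by auto
qed (auto simp: block_mat_def)

lemma block_column_mult_vec:
  assumes F: "\<And>i. i < nr \<Longrightarrow> F i \<in> carrier_mat r c" and x: "x \<in> carrier_vec c"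
    and i: "i < nr" and a: "a < r"
  shows "(block_mat r c nr 1 (\<lambda>i _. F i) *\<^sub>v x) $ (i * r + a) = (F i *\<^sub>v x) $ a"
  using block_mat_mult_vec[of nr 1 "\<lambda>i _. F i" r c x i a] assms by simp

lemma transpose_block_row_mult_vec:
  assumes F: "\<And>j. j < nc \<Longrightarrow> F j \<in> carrier_mat r c" and r: "r > 0" and c: "c > 0"
    and x: "x \<in> carrier_vec r" and j: "j < nc" and b: "b < c"
  shows "(transpose_mat (block_mat r c 1 nc (\<lambda>_ j. F j)) *\<^sub>v x) $ (j * c + b)
    = (transpose_mat (F j) *\<^sub>v x) $ b"
proof -
  have "transpose_mat (block_mat r c 1 nc (\<lambda>_ j. F j)) = block_mat c r nc 1 (\<lambda>j _. transpose_mat (F j))"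
    by (rule transpose_block_mat) (use F r c in auto)
  then show ?thesis using block_column_mult_vec[of nc "\<lambda>j. transpose_mat (F j)" c r x j b] F x j b by simp
qed

section \<open>The system matrices\<close>

locale lti_system =
  fixes n m p N :: nat and A B C D :: "real mat"
  assumes n_pos: "n > 0" and m_pos: "m > 0" and p_pos: "p > 0"
    and A: "A \<in> carrier_mat n n" and B: "B \<in> carrier_mat n m"
    and C: "C \<in> carrier_mat p n" and D: "D \<in> carrier_mat p m"
    and DDT_pd: "pd_mat (D * transpose_mat D)"
    and reach: "reachable n A B" and obs: "observable n A C" and N_ge: "N \<ge> n"
begin

abbreviation "D\<^sub>N \<equiv> DN m p N D"
abbreviation "H\<^sub>N \<equiv> HN m p N A B C"
abbreviation "L\<^sub>N \<equiv> LN n m N A B"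
abbreviation "O\<^sub>N \<equiv> ON n p N A C"
abbreviation "R\<^sub>N \<equiv> RN n m N A B"
abbreviation "X\<^sub>N \<equiv> D\<^sub>N * transpose_mat D\<^sub>N + H\<^sub>N * transpose_mat H\<^sub>N"
abbreviation "G\<^sub>N \<equiv> 1\<^sub>m (N * m) + transpose_mat H\<^sub>N * inv_mat (D\<^sub>N * transpose_mat D\<^sub>N) * H\<^sub>N"
abbreviation "M\<^sub>N \<equiv> L\<^sub>N * inv_mat G\<^sub>N * transpose_mat L\<^sub>N"
abbreviation "J\<^sub>N \<equiv> ONR n N A - L\<^sub>N * transpose_mat H\<^sub>N * inv_mat X\<^sub>N * O\<^sub>N"
abbreviation "\<Omega>\<^sub>N \<equiv> transpose_mat O\<^sub>N * inv_mat X\<^sub>N * O\<^sub>N"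

lemma block_carriers:
  "D\<^sub>N \<in> carrier_mat (p * N) (m * N)" "H\<^sub>N \<in> carrier_mat (p * N) (m * N)"
  "L\<^sub>N \<in> carrier_mat (n * N) (m * N)" "O\<^sub>N \<in> carrier_mat (p * N) n"
  "ONR n N A \<in> carrier_mat (n * N) n" "R\<^sub>N \<in> carrier_mat n (m * N)"
  unfolding DN_def HN_def LN_def ON_def ONR_def RN_def block_mat_def by auto

lemma transpose_DN_injective:
  assumes x: "x \<in> carrier_vec (p * N)" and zero: "transpose_mat D\<^sub>N *\<^sub>v x = 0\<^sub>v (m * N)"
  shows "x = 0\<^sub>v (p * N)"
proof (rule vec_eq_zero_if_blocks_zero[OF x])
  fix j assume j: "j < N"
  let ?f = "\<lambda>i j. if i = j then D else 0\<^sub>m p m"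
  have f: "\<And>i j. ?f i j \<in> carrier_mat p m" and fT: "\<And>i j. transpose_mat (?f i j) \<in> carrier_mat m p"
    using D by auto
  have T: "transpose_mat D\<^sub>N = block_mat m p N N (\<lambda>j i. transpose_mat (?f i j))"
    unfolding DN_def by (rule transpose_block_mat[OF f p_pos m_pos])
  define y where "y = vec_block p j x"
  have y: "y \<in> carrier_vec p" unfolding y_def by simp
  have "transpose_mat D *\<^sub>v y = 0\<^sub>v m"
  proof (rule eq_vecI)
    fix b assume "b < dim_vec (0\<^sub>v m)"
    then have b: "b < m" by simp
    have "(transpose_mat D\<^sub>N *\<^sub>v x) $ (j * m + b) = (\<Sum>i<N. (transpose_mat (?f i j) *\<^sub>v vec_block p i x) $ b)"
      unfolding T by (rule block_mat_mult_vec[OF fT _ j b]) (use x in \<open>simp add: mult.commute\<close>)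
    also have "\<dots> = (\<Sum>i<N. if i = j then (transpose_mat D *\<^sub>v y) $ b else 0)"
      by (rule sum.cong) (use b D in \<open>auto simp: y_def\<close>)
    also have "\<dots> = (transpose_mat D *\<^sub>v y) $ b" using j by simp
    finally show "(transpose_mat D *\<^sub>v y) $ b = 0\<^sub>v m $ b"
      using zero block_index_less[OF j b] b by simp
  qed (use D in simp)
  then have "y \<bullet> ((D * transpose_mat D) *\<^sub>v y) = 0"
    using quad_form_congruence[OF D one_carrier_mat y] D by simp
  then show "vec_block p j x = 0\<^sub>v p"
    using DDT_pd y D unfolding y_def pd_mat_def by force
qed

lemma ON_injective:
  assumes x: "x \<in> carrier_vec n" and zero: "O\<^sub>N *\<^sub>v x = 0\<^sub>v (p * N)"
  shows "x = 0\<^sub>v n"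
proof -
  have CA: "\<And>k. C * A ^\<^sub>m k \<in> carrier_mat p n" using A C by auto
  have CAx: "(C * A ^\<^sub>m k) *\<^sub>v x = 0\<^sub>v p" if k: "k < N" for k
  proof (rule eq_vecI)
    fix a assume "a < dim_vec (0\<^sub>v p)"
    then have a: "a < p" by simp
    define i where "i = N - 1 - k"
    have i: "i < N" and ki: "N - 1 - i = k" using k unfolding i_def by auto
    have "(O\<^sub>N *\<^sub>v x) $ (i * p + a) = ((C * A ^\<^sub>m (N - 1 - i)) *\<^sub>v x) $ a"
      unfolding ON_def by (rule block_column_mult_vec) (use CA x i a in auto)
    then show "((C * A ^\<^sub>m k) *\<^sub>v x) $ a = 0\<^sub>v p $ a" using zero ki a block_index_less[OF i a] by simp
  qed (use C in simp)
  \<comment> \<open>The columns of the observability matrix are the rows of the blocks \<open>CA\<^sup>j\<close>, \<open>j < n \<le> N\<close>.\<close>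
  let ?O = "block_mat n (dim_col (transpose_mat C)) 1 n (\<lambda>_ j. (transpose_mat A ^\<^sub>m j) * transpose_mat C)"
  have dc: "dim_col (transpose_mat C) = p" using C by simp
  have O: "?O \<in> carrier_mat n (p * n)" unfolding block_mat_def dc by simp
  have rk: "vec_space.rank n ?O = n" using obs unfolding observable_def reachable_def by simp
  show ?thesis
  proof (rule full_rank_orthogonal_cols_imp_zero[OF O rk x])
    fix t assume t: "t < p * n"
    note d = block_index_decomp[OF t]
    have F: "\<And>j. transpose_mat A ^\<^sub>m j * transpose_mat C \<in> carrier_mat n p" using A C by auto
    have "transpose_mat (transpose_mat A ^\<^sub>m (t div p) * transpose_mat C) = C * A ^\<^sub>m (t div p)"
      using A C by (simp add: transpose_mult[of _ n n _ p] transpose_pow_mat)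
    moreover have "col ?O t \<bullet> x = (transpose_mat ?O *\<^sub>v x) $ (t div p * p + t mod p)"
      using O t d(1) by simp
    moreover have "\<dots> = (transpose_mat (transpose_mat A ^\<^sub>m (t div p) * transpose_mat C) *\<^sub>v x) $ (t mod p)"
      unfolding dc by (rule transpose_block_row_mult_vec[OF F n_pos p_pos x d(2,3)])
    ultimately have "col ?O t \<bullet> x = ((C * A ^\<^sub>m (t div p)) *\<^sub>v x) $ (t mod p)" by simp
    also have "\<dots> = 0" using CAx[of "t div p"] d N_ge by simp
    finally show "col ?O t \<bullet> x = 0" .
  qed
qed

lemma transpose_RN_injective:
  assumes x: "x \<in> carrier_vec n" and zero: "transpose_mat R\<^sub>N *\<^sub>v x = 0\<^sub>v (m * N)"
  shows "x = 0\<^sub>v n"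
proof -
  have F: "\<And>j. A ^\<^sub>m j * B \<in> carrier_mat n m" using A B by auto
  let ?R = "block_mat n (dim_col B) 1 n (\<lambda>_ j. A ^\<^sub>m j * B)"
  have dc: "dim_col B = m" using B by simp
  have R: "?R \<in> carrier_mat n (m * n)" unfolding block_mat_def dc by simp
  have rk: "vec_space.rank n ?R = n" using reach unfolding reachable_def by simp
  show ?thesis
  proof (rule full_rank_orthogonal_cols_imp_zero[OF R rk x])
    fix t assume t: "t < m * n"
    note d = block_index_decomp[OF t]
    have j: "t div m < N" using d(2) N_ge by simp
    have "col ?R t \<bullet> x = (transpose_mat ?R *\<^sub>v x) $ (t div m * m + t mod m)"
      using R t d(1) by simp
    also have "\<dots> = (transpose_mat (A ^\<^sub>m (t div m) * B) *\<^sub>v x) $ (t mod m)"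
      unfolding dc by (rule transpose_block_row_mult_vec[OF F n_pos m_pos x d(2,3)])
    also have "\<dots> = (transpose_mat R\<^sub>N *\<^sub>v x) $ (t div m * m + t mod m)"
      unfolding RN_def by (rule transpose_block_row_mult_vec[OF F n_pos m_pos x j d(3), symmetric])
    also have "\<dots> = 0" using zero block_index_less[OF j d(3)] by simp
    finally show "col ?R t \<bullet> x = 0" .
  qed
qed

lemma DDT_N_pd: "pd_mat (D\<^sub>N * transpose_mat D\<^sub>N)"
  using pd_mat_congruence[OF block_carriers(1) one_carrier_mat pd_mat_one transpose_DN_injective]
    block_carriers(1) by simp

lemma X_N_pd: "pd_mat X\<^sub>N" and X_N_carrier: "X\<^sub>N \<in> carrier_mat (p * N) (p * N)"
proof -
  have H: "H\<^sub>N * 1\<^sub>m (m * N) * transpose_mat H\<^sub>N = H\<^sub>N * transpose_mat H\<^sub>N" using block_carriers(2) by simp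
  have "psd_mat (H\<^sub>N * transpose_mat H\<^sub>N)"
    using psd_mat_congruence[OF block_carriers(2) one_carrier_mat pd_mat_imp_psd_mat[OF one_carrier_mat pd_mat_one]]
    unfolding H by simp
  moreover have "D\<^sub>N * transpose_mat D\<^sub>N \<in> carrier_mat (p * N) (p * N)"
    and "H\<^sub>N * transpose_mat H\<^sub>N \<in> carrier_mat (p * N) (p * N)" using block_carriers(1,2) by auto
  ultimately show "pd_mat X\<^sub>N" using pd_mat_add_psd DDT_N_pd by blast
  show "X\<^sub>N \<in> carrier_mat (p * N) (p * N)" using block_carriers(1,2) by simp
qed

lemma G_N_carrier: "G\<^sub>N \<in> carrier_mat (m * N) (m * N)"
  and G_N_sym: "transpose_mat G\<^sub>N = G\<^sub>N"
  and G_N_ge: "\<And>x. x \<in> carrier_vec (m * N) \<Longrightarrow> x \<bullet> x \<le> x \<bullet> (G\<^sub>N *\<^sub>v x)"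
proof -
  let ?K = "transpose_mat H\<^sub>N * inv_mat (D\<^sub>N * transpose_mat D\<^sub>N) * H\<^sub>N"
  have DD: "D\<^sub>N * transpose_mat D\<^sub>N \<in> carrier_mat (p * N) (p * N)" using block_carriers(1) by simp
  have HT: "transpose_mat H\<^sub>N \<in> carrier_mat (m * N) (p * N)" using block_carriers(2) by simp
  note inv = pd_mat_inv[OF DD DDT_N_pd]
  have "psd_mat (transpose_mat H\<^sub>N * inv_mat (D\<^sub>N * transpose_mat D\<^sub>N) * transpose_mat (transpose_mat H\<^sub>N))"
    by (rule psd_mat_congruence[OF HT inv(2) pd_mat_imp_psd_mat[OF inv(2,1)]])
  then have K: "psd_mat ?K" and Kc: "?K \<in> carrier_mat (m * N) (m * N)" using HT inv(2) by auto
  have I: "1\<^sub>m (N * m) \<in> carrier_mat (m * N) (m * N)" by (simp add: mult.commute)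
  show "G\<^sub>N \<in> carrier_mat (m * N) (m * N)" using I Kc by simp
  show "transpose_mat G\<^sub>N = G\<^sub>N"
    using transpose_add[OF I Kc] K Kc unfolding psd_mat_carrier_iff[OF Kc] by simp
  show "x \<bullet> x \<le> x \<bullet> (G\<^sub>N *\<^sub>v x)" if x: "x \<in> carrier_vec (m * N)" for x
    using quad_form_add[OF I Kc x] K x unfolding psd_mat_carrier_iff[OF Kc] by (simp add: mult.commute)
qed

lemma G_N_pd: "pd_mat G\<^sub>N"
  using G_N_sym G_N_ge scalar_prod_self_pos[of _ "m * N"]
  unfolding pd_mat_carrier_iff[OF G_N_carrier] by (meson less_le_trans)

lemma M_N_psd: "psd_mat M\<^sub>N" and M_N_carrier: "M\<^sub>N \<in> carrier_mat (n * N) (n * N)"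
proof -
  note inv = pd_mat_inv[OF G_N_carrier G_N_pd]
  show "psd_mat M\<^sub>N" by (rule psd_mat_congruence[OF block_carriers(3) inv(2) pd_mat_imp_psd_mat[OF inv(2,1)]])
  show "M\<^sub>N \<in> carrier_mat (n * N) (n * N)" using block_carriers(3) inv(2) by auto
qed

lemma Omega_N_pd: "pd_mat \<Omega>\<^sub>N" and Omega_N_carrier: "\<Omega>\<^sub>N \<in> carrier_mat n n"
proof -
  have OT: "transpose_mat O\<^sub>N \<in> carrier_mat n (p * N)" using block_carriers(4) by simp
  note inv = pd_mat_inv[OF X_N_carrier X_N_pd]
  show "pd_mat \<Omega>\<^sub>N" using pd_mat_congruence[OF OT inv(2,1)] ON_injective by simp
  show "\<Omega>\<^sub>N \<in> carrier_mat n n" using OT inv(2) block_carriers(4) by auto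
qed

lemma J_N_carrier: "J\<^sub>N \<in> carrier_mat (n * N) n"
  using block_carriers pd_mat_inv(2)[OF X_N_carrier X_N_pd] by (intro minus_carrier_mat) auto

lemma transpose_LN_last_unit_vec: "transpose_mat L\<^sub>N *\<^sub>v unit_vec (n * N) (n * N - 1) = 0\<^sub>v (m * N)"
proof (rule eq_vecI)
  have nN: "0 < n * N" using n_pos N_ge by simp
  have "n * N - 1 = (n - 1) + (N - 1) * n" using n_pos N_ge by (cases N) (auto simp: algebra_simps)
  moreover have "((n - 1) + (N - 1) * n) div n = (N - 1) + (n - 1) div n"
    using n_pos by (rule div_mult_self1[OF neq0_conv[THEN iffD2]])
  ultimately have last_block: "(n * N - 1) div n = N - 1" using n_pos by simp
  fix j assume "j < dim_vec (0\<^sub>v (m * N))"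
  then have j: "j < m * N" by simp
  have "(transpose_mat L\<^sub>N *\<^sub>v unit_vec (n * N) (n * N - 1)) $ j = L\<^sub>N $$ (n * N - 1, j)"
    using block_carriers(3) j nN by (simp add: scalar_prod_right_unit)
  also have "\<dots> = 0"
    unfolding LN_def block_mat_def using j nN n_pos m_pos last_block block_index_decomp(2)[OF j] by auto
  finally show "(transpose_mat L\<^sub>N *\<^sub>v unit_vec (n * N) (n * N - 1)) $ j = 0\<^sub>v (m * N) $ j" using j by simp
qed (use block_carriers(3) in simp)

lemma sigma1_MN_nonneg: "0 \<le> sigma1 (MN n m p N A B C D)"
proof (rule sigma1_nonneg_if_singular[OF _ unit_vec_carrier])
  show "MN n m p N A B C D \<in> carrier_mat (n * N) (n * N)" using M_N_carrier unfolding MN_def .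
  have "n * N - 1 < n * N" using n_pos N_ge by simp
  then show "unit_vec (n * N) (n * N - 1) \<noteq> 0\<^sub>v (n * N)" by (metis index_unit_vec(1) index_zero_vec(1) zero_neq_one)
  note inv = pd_mat_inv[OF G_N_carrier G_N_pd]
  have "M\<^sub>N *\<^sub>v unit_vec (n * N) (n * N - 1)
      = (L\<^sub>N * inv_mat G\<^sub>N) *\<^sub>v (transpose_mat L\<^sub>N *\<^sub>v unit_vec (n * N) (n * N - 1))"
    by (rule assoc_mult_mat_vec) (use block_carriers(3) inv(2) in auto)
  then show "MN n m p N A B C D *\<^sub>v unit_vec (n * N) (n * N - 1) = 0\<^sub>v (n * N)"
    unfolding MN_def transpose_LN_last_unit_vec using block_carriers(3) inv(2) by simp
qed

lemma W_Phi_pd: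
  assumes P: "Phi \<in> carrier_mat (n * N) (n * N)" and P_sym: "transpose_mat Phi = Phi"
    and bound: "psd_mat (phi \<cdot>\<^sub>m 1\<^sub>m (n * N) - Phi)" and phi: "0 \<le> phi"
    and small: "phi * frob_sq (LN n m N A B) < 1"
  shows "pd_mat (W_Phi n m p N A B C D Phi)"
proof -
  let ?Q = "G\<^sub>N - transpose_mat L\<^sub>N * Phi * L\<^sub>N"
  have pd: "pd_mat ?Q"
    by (rule pd_mat_diff_congruence[OF G_N_carrier block_carriers(3) P G_N_sym G_N_ge P_sym bound phi small])
  have "?Q \<in> carrier_mat (m * N) (m * N)" using G_N_carrier block_carriers(3) P by auto
  note inv = pd_mat_inv[OF this pd]
  have "pd_mat (R\<^sub>N * inv_mat ?Q * transpose_mat R\<^sub>N)"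
    by (rule pd_mat_congruence[OF block_carriers(6) inv(2,1) transpose_RN_injective])
  then show ?thesis unfolding W_Phi_def Q_Phi_def .
qed

lemma Omega_Phi_pd:
  assumes P: "Phi \<in> carrier_mat (n * N) (n * N)" and psd: "psd_mat Phi"
    and bound: "psd_mat (phi \<cdot>\<^sub>m 1\<^sub>m (n * N) - Phi)" and phi: "0 \<le> phi"
    and small_M: "4 * phi^2 * frob_sq (MN n m p N A B C D) \<le> 1"
    and \<mu>: "\<And>x. x \<in> carrier_vec n \<Longrightarrow> \<mu> * (x \<bullet> x) \<le> x \<bullet> (OmegaN n m p N A B C D *\<^sub>v x)"
    and small_J: "4 * phi * frob_sq (JN n m p N A B C D) < \<mu>"
  shows "pd_mat (Omega_Phi n m p N A B C D Phi)"
proof -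
  let ?T = "1\<^sub>m (n * N) - Phi * M\<^sub>N"
  let ?S = "- (inv_mat ?T * Phi)"
  note M = M_N_carrier
  have P_sym: "transpose_mat Phi = Phi" and M_sym: "transpose_mat M\<^sub>N = M\<^sub>N"
    using psd M_N_psd unfolding psd_mat_carrier_iff[OF P] psd_mat_carrier_iff[OF M] by auto
  have T: "?T \<in> carrier_mat (n * N) (n * N)" using minus_carrier_mat[OF mult_carrier_mat[OF P M]] by simp
  note small_M = small_M[unfolded MN_def]
  note inj = one_minus_mult_injective[OF M P psd bound phi small_M]
  have S: "?S \<in> carrier_mat (n * N) (n * N)" using inv_mat_if_injective(1)[OF T inj] P by auto
  have S_sym: "transpose_mat ?S = ?S"
    using transpose_inv_mat_mult[OF T P inj P_sym one_minus_mult_intertwines[OF M P M_sym P_sym]]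
    by (simp add: transpose_uminus)
  have S_ge: "- (4 * phi * (y \<bullet> y)) \<le> y \<bullet> (?S *\<^sub>v y)" if y: "y \<in> carrier_vec (n * N)" for y
    using quad_form_resolvent_le[OF M M_N_psd P psd bound phi small_M y]
      inv_mat_if_injective(1)[OF T inj] P y by simp
  have "pd_mat (\<Omega>\<^sub>N + transpose_mat J\<^sub>N * ?S * J\<^sub>N)"
    using pd_mat_add_congruence[OF Omega_N_carrier J_N_carrier S _ \<mu>[unfolded OmegaN_def] S_sym S_ge _
        small_J[unfolded JN_def]] Omega_N_pd
      phi unfolding pd_mat_carrier_iff[OF Omega_N_carrier] by simp
  then show ?thesis unfolding Omega_Phi_def S_inv_def OmegaN_def JN_def MN_def .
qed

lemma OmegaN_lower_bound:
  obtains \<mu> where "\<mu> > 0" and "\<And>x. x \<in> carrier_vec n \<Longrightarrow> \<mu> * (x \<bullet> x) \<le> x \<bullet> (OmegaN n m p N A B C D *\<^sub>v x)"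
  using pd_mat_lower_bound[OF Omega_N_carrier Omega_N_pd] unfolding OmegaN_def by blast

lemma less_phi_tilde:
  assumes "0 < phi" "phi \<le> 1 / (sigma1 (MN n m p N A B C D) + 1)"
  shows "ereal phi < phi_tilde n m p N A B C D"
proof (cases "sigma1 (MN n m p N A B C D) = 0")
  case False
  then have "0 < sigma1 (MN n m p N A B C D)" using sigma1_MN_nonneg by simp
  then have "1 / (sigma1 (MN n m p N A B C D) + 1) < 1 / sigma1 (MN n m p N A B C D)"
    by (intro divide_strict_left_mono) auto
  then have "phi < 1 / sigma1 (MN n m p N A B C D)" using assms(2) by linarith
  then show ?thesis using False unfolding phi_tilde_def by simp
qed (simp add: phi_tilde_def)

end

lemma mult_less_if_le_divide:
  fixes F phi c :: real
  assumes F: "0 \<le> F" and phi: "0 \<le> phi" and c: "0 < c" and le: "phi \<le> c / (F + 1)"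
  shows "phi * F < c"
proof -
  have "phi * F \<le> c / (F + 1) * F" using le F by (rule mult_right_mono)
  also have "\<dots> < c" using F c by (simp add: field_simps)
  finally show ?thesis .
qed

lemma four_sq_mult_le_one:
  fixes F phi :: real
  assumes F: "0 \<le> F" and phi: "0 \<le> phi" and le: "phi \<le> 1 / (2 * (F + 1))"
  shows "4 * phi^2 * F \<le> 1"
proof -
  have "2 * phi * F + 2 * phi \<le> 1" using le F by (simp add: field_simps)
  moreover have "0 \<le> 2 * phi * F" using phi F by simp
  ultimately have "2 * phi \<le> 1" by linarith
  moreover have "2 * phi * F \<le> 1"
    using mult_less_if_le_divide[OF F phi, of "1/2"] le by (simp add: field_simps)
  ultimately have "(2 * phi) * (2 * phi * F) \<le> 1 * 1" using phi F by (intro mult_mono) auto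
  then show ?thesis by (simp add: power2_eq_square algebra_simps)
qed

theorem proposition1:
  fixes n m p N :: nat and A B C D :: "real mat"
  assumes "n > 0" "m > 0" "p > 0"
    and "A \<in> carrier_mat n n" "B \<in> carrier_mat n m" "C \<in> carrier_mat p n" "D \<in> carrier_mat p m"
    and "pd_mat (D * transpose_mat D)"
    and "B * transpose_mat D = 0\<^sub>m n p"
    and "reachable n A B" and "observable n A C"
    and "N \<ge> n"
  shows "\<exists>phiN :: real. 0 < phiN \<and> ereal phiN < phi_tilde n m p N A B C D \<and>
           (\<forall>Phi \<in> carrier_mat (n * N) (n * N).
              sym_mat Phi \<and> psd_mat Phi \<and> psd_mat (phiN \<cdot>\<^sub>m 1\<^sub>m (n * N) - Phi) \<longrightarrow>
                pd_mat (Omega_Phi n m p N A B C D Phi) \<and> pd_mat (W_Phi n m p N A B C D Phi))"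
proof -
  interpret lti_system n m p N A B C D using assms by unfold_locales
  obtain \<mu> where "\<mu> > 0" and \<mu>: "\<And>x. x \<in> carrier_vec n \<Longrightarrow> \<mu> * (x \<bullet> x) \<le> x \<bullet> (OmegaN n m p N A B C D *\<^sub>v x)"
    using OmegaN_lower_bound by blast
  define FL where "FL = frob_sq (LN n m N A B)"
  define FM where "FM = frob_sq (MN n m p N A B C D)"
  define FJ where "FJ = frob_sq (JN n m p N A B C D)"
  define phi where "phi = min (min (1 / (FL + 1)) (1 / (2 * (FM + 1))))
    (min ((\<mu> / 4) / (FJ + 1)) (1 / (sigma1 (MN n m p N A B C D) + 1)))"
  have F: "0 \<le> FL" "0 \<le> FM" "0 \<le> FJ" unfolding FL_def FM_def FJ_def by (rule frob_sq_nonneg)+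
  have phi: "0 < phi" unfolding phi_def using F \<open>\<mu> > 0\<close> sigma1_MN_nonneg by simp
  have le: "phi \<le> 1 / (FL + 1)" "phi \<le> 1 / (2 * (FM + 1))" "phi \<le> (\<mu> / 4) / (FJ + 1)"
    "phi \<le> 1 / (sigma1 (MN n m p N A B C D) + 1)" unfolding phi_def by auto
  have "phi * FL < 1" using mult_less_if_le_divide[OF F(1) _ _ le(1)] phi by simp
  moreover have "4 * phi^2 * FM \<le> 1" using four_sq_mult_le_one[OF F(2) _ le(2)] phi by simp
  moreover have "4 * phi * FJ < \<mu>" using mult_less_if_le_divide[OF F(3) _ _ le(3)] phi \<open>\<mu> > 0\<close> by simp
  moreover have "ereal phi < phi_tilde n m p N A B C D" by (rule less_phi_tilde[OF phi le(4)])
  ultimately show ?thesis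
    using phi Omega_Phi_pd[OF _ _ _ _ _ \<mu>] W_Phi_pd unfolding FL_def FM_def FJ_def sym_mat_def
    by (intro exI[of _ phi]) auto
qed

end
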